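(* Let $f(q)=q^{-1}+\sum_{k\geq1}a_kq^k$ be completely $(2{+})$-replicable with replicates $f^{[n]}(q)=q^{-1}+\sum_{k\geq1}a_k^{[n]}q^k$, $n\in\mathbb{N}\cup\sqrt{2}\mathbb{N}$. Then $$\sigma_2\Big(f^{[2]}(2z),\,f^{[\sqrt{2}]}(z),\,f^{[\sqrt{2}]}\big(z+\tfrac12\big),\,f\big(\tfrac{z}{2}\big),\,f\big(\tfrac{z+1}{2}\big)\Big)=2a_2f(z)-f^{[2]}(z)+2(a_4-a_1)+2a_2^{[\sqrt{2}]}-\big(f^{[\sqrt{2}]}(z)\big)^2,$$ where $\sigma_2(x_1,\dots,x_5)=\sum_{1\leq i<j\leq5}x_ix_j$ is the second elementary symmetric function.
   Context: Here $q=e^{2\pi iz}$ and a series $h(q)$ is also written $h(z)$; for integers $a,d>0$ and $b$, $h\big(\frac{az+b}{d}\big)$ denotes the formal series obtained by substituting $q\mapsto e^{2\pi ib/d}q^{a/d}$ (so e.g. $h(z+\frac12)$ means $q\mapsto -q$, $h(\frac{z+1}{2})$ means $q\mapsto -q^{1/2}$). Faber polynomials: for $h=q^{-1}+\sum_{k\geq1}c_kq^k$ with complex coefficients, $P_{n,h}(X)$ is the unique monic polynomial of degree $n$ with $P_{n,h}(h)-q^{-n}$ containing only positive powers of $q$. A series $h$ of this form is $(2{+})$-replicable with $(2{+})$-replicates $h^{[n]},h^{[n\sqrt{2}]}$ ($n\in\mathbb{N}$, series of the same form, $h^{[1]}=h$) if for every $n\geq1$ $$P_{n,h}(h)=\sum_{\substack{ad=n\\0\leq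 b<d}}h^{[a]}\Big(\frac{az+b}{d}\Big)+\sum_{\substack{ad=n\\ d\ \text{even}\\0\leq b<d}}h^{[a\sqrt{2}]}\Big(\frac{2az+b}{d}\Big).$$ $f$ is completely $(2{+})$-replicable with replicates $f^{[n]}$, $n\in\mathbb{N}\cup\sqrt{2}\mathbb{N}$ ($f^{[1]}=f$), if $f$ is $(2{+})$-replicable with these replicates and for every $n\in\mathbb{N}\cup\sqrt{2}\mathbb{N}$ the series $f^{[n]}$ is $(2{+})$-replicable with $(2{+})$-replicates $(f^{[n]})^{[m]}=f^{[mn]}$, $m\in\mathbb{N}\cup\sqrt{2}\mathbb{N}$. *)

theory Defs
  imports "HOL-Computational_Algebra.Computational_Algebra" "HOL-Analysis.Analysis"
begin

text \<open>A normalized series h = q^{-1} + sum_{k>=1} c k q^k is represented by its coefficient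
  function c (the value c 0 is ignored). As a formal Laurent series in q:\<close>

definition hser :: "(nat \<Rightarrow> complex) \<Rightarrow> complex fls" where
  "hser c = fls_X_intpow (-1) + fps_to_fls (Abs_fps (\<lambda>k. if k = 0 then 0 else c k))"

text \<open>Substitution q := zeta * t^m in a formal Laurent series g (m > 0): the coefficient of
  q^k gets multiplied by zeta^k and moved to t^(m k).\<close>

definition fls_subst :: "nat \<Rightarrow> complex \<Rightarrow> complex fls \<Rightarrow> complex fls" where
  "fls_subst m \<zeta> g = fls_compose_power (Abs_fls (\<lambda>k. \<zeta> powi k * fls_nth g k)) m"

definition rootu :: "nat \<Rightarrow> nat \<Rightarrow> complex" where
  "rootu b d = cis (2 * pi * real b / real d)"

definition is_faber :: "nat \<Rightarrow> (nat \<Rightarrow> complex) \<Rightarrow> complex poly \<Rightarrow> bool" where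
  "is_faber n c p \<longleftrightarrow> degree p = n \<and> lead_coeff p = 1 \<and>
     (\<forall>k \<le> 0. fls_nth (poly (map_poly fls_const p) (hser c) - fls_X_intpow (- int n)) k = 0)"

definition faber :: "nat \<Rightarrow> (nat \<Rightarrow> complex) \<Rightarrow> complex poly" where
  "faber n c = (THE p. is_faber n c p)"

text \<open>Replicates are indexed by (a, e): (a, False) stands for h^[a],
  (a, True) for h^[a sqrt 2]. The identity for n is written in the variable t = q^{1/n}:
  then q = t^n, and h^[a]((az+b)/d) (ad = n) is h^[a] with q := e^{2 pi i b/d} t^(a^2), and
  h^[a sqrt2]((2az+b)/d) is h^[a sqrt 2] with q := e^{2 pi i b/d} t^(2 a^2).\<close>

definition rep2plus :: "(nat \<Rightarrow> complex) \<Rightarrow> (nat \<Rightarrow> bool \<Rightarrow> (nat \<Rightarrow> complex)) \<Rightarrow> bool" where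
  "rep2plus h R \<longleftrightarrow> R 1 False = h \<and>
     (\<forall>n \<ge> 1. fls_subst n 1 (poly (map_poly fls_const (faber n h)) (hser h)) =
        (\<Sum>d \<in> {d. d dvd n}. \<Sum>b < d.
            fls_subst ((n div d)^2) (rootu b d) (hser (R (n div d) False)))
      + (\<Sum>d \<in> {d. d dvd n \<and> even d}. \<Sum>b < d.
            fls_subst (2 * (n div d)^2) (rootu b d) (hser (R (n div d) True))))"

text \<open>Complete (2+)-replicability: F n e is f^[n * (sqrt 2)^e]; the product of indices
  (m,e1)(n,e2) is (m n 2^{[e1 and e2]}, e1 xor e2).\<close>

definition completely_rep2plus :: "(nat \<Rightarrow> complex) \<Rightarrow> (nat \<Rightarrow> bool \<Rightarrow> (nat \<Rightarrow> complex)) \<Rightarrow> bool" where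
  "completely_rep2plus f F \<longleftrightarrow> F 1 False = f \<and>
     (\<forall>n e. n \<ge> 1 \<longrightarrow>
        rep2plus (F n e) (\<lambda>m e'. F (m * n * (if e \<and> e' then 2 else 1)) (e \<noteq> e')))"

definition sigma2 :: "'a::comm_ring list \<Rightarrow> 'a" where
  "sigma2 xs = (\<Sum>i < length xs. \<Sum>j < length xs. if i < j then xs ! i * xs ! j else 0)"

end

theory Submission
  imports Defs
begin

(* Since 2 sigma2(x) = (sum of x_i)^2 - (sum of x_i^2), it suffices to know the sum and the
   sum of squares of the five series. They are precisely the terms of the n = 2 replication
   identity for f, so their sum is P_2(f) = f^2 - 2 a_1 at q^2. Each square is in turn given by
   an n = 2 identity, for f^[2], for f^[sqrt 2] and for f at twisted arguments, and the five
   right-hand sides add up to that of the n = 4 identity for f, i.e. P_4(f), plus terms in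
   f^[2](z) and f^[sqrt 2](z)^2. The constants are matched by the relation
   2 a_3 + a_1^2 = a_1^[2] + 2 a_4 + 2 a_2^[sqrt 2], the coefficient of q^2 in the n = 2 identity.
   Squaring f(z/2) brings in f(z/4), so the computation is carried out in the variable q^(1/4)
   and transported back. *)

unbundle fps_syntax

section \<open>Twisted substitution\<close>

definition fls_twist :: "'a::field \<Rightarrow> 'a fls \<Rightarrow> 'a fls" where
  "fls_twist \<zeta> g = Abs_fls (\<lambda>k. \<zeta> powi k * g $$ k)"

lemma fls_twist_nth [simp]: "fls_twist \<zeta> g $$ n = \<zeta> powi n * g $$ n"
proof -
  have "\<forall>\<^sub>\<infinity>n::nat. \<zeta> powi (- int n) * g $$ (- int n) = 0"
    using MOST_fls_neg_nth_eq_0[of g] by (rule eventually_mono) simp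
  thus ?thesis by (simp add: fls_twist_def)
qed

lemma fls_twist_add [simp]: "fls_twist \<zeta> (f + g) = fls_twist \<zeta> f + fls_twist \<zeta> g"
  by (rule fls_eqI) (simp add: algebra_simps)

lemma fls_twist_diff [simp]: "fls_twist \<zeta> (f - g) = fls_twist \<zeta> f - fls_twist \<zeta> g"
  by (rule fls_eqI) (simp add: algebra_simps)

lemma fls_twist_const [simp]: "fls_twist \<zeta> (fls_const c) = fls_const c"
  by (rule fls_eqI) simp

lemma fls_subdegree_twist:
  assumes "\<zeta> \<noteq> 0"
  shows "fls_subdegree (fls_twist \<zeta> g) = fls_subdegree g"
proof (cases "g = 0")
  case True
  hence "fls_twist \<zeta> g = 0" by (intro fls_eqI) simp
  with True show ?thesis by simp
next
  case False
  then show ?thesis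
    using assms by (intro fls_subdegree_eqI) simp_all
qed

lemma fls_twist_mult:
  assumes "\<zeta> \<noteq> 0"
  shows "fls_twist \<zeta> (f * g) = fls_twist \<zeta> f * fls_twist \<zeta> g"
proof (rule fls_eqI)
  fix n
  have "(fls_twist \<zeta> f * fls_twist \<zeta> g) $$ n
     = (\<Sum>i=fls_subdegree f..n - fls_subdegree g. (\<zeta> powi i * f $$ i) * (\<zeta> powi (n - i) * g $$ (n - i)))"
    by (simp add: fls_times_nth(2) fls_subdegree_twist[OF assms])
  also have "\<dots> = (\<Sum>i=fls_subdegree f..n - fls_subdegree g. \<zeta> powi n * (f $$ i * g $$ (n - i)))"
  proof (rule sum.cong[OF refl])
    fix i
    have "\<zeta> powi n = \<zeta> powi i * \<zeta> powi (n - i)"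
      using power_int_add[of \<zeta> i "n - i"] assms by simp
    thus "(\<zeta> powi i * f $$ i) * (\<zeta> powi (n - i) * g $$ (n - i)) = \<zeta> powi n * (f $$ i * g $$ (n - i))"
      by (simp add: algebra_simps)
  qed
  also have "\<dots> = fls_twist \<zeta> (f * g) $$ n"
    by (simp add: fls_times_nth(2) sum_distrib_left)
  finally show "fls_twist \<zeta> (f * g) $$ n = (fls_twist \<zeta> f * fls_twist \<zeta> g) $$ n" ..
qed

lemma fls_twist_power: "\<zeta> \<noteq> 0 \<Longrightarrow> fls_twist \<zeta> (f ^ k) = fls_twist \<zeta> f ^ k"
  by (induction k) (simp_all add: fls_twist_mult flip: fls_const_1)

lemma fls_twist_twist: "fls_twist \<zeta>' (fls_twist \<zeta> g) = fls_twist (\<zeta> * \<zeta>') g"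
  by (rule fls_eqI) (simp add: power_int_mult_distrib)

lemma fls_twist_compose_power:
  assumes "m > 0"
  shows "fls_twist \<zeta> (fls_compose_power g m) = fls_compose_power (fls_twist (\<zeta> ^ m) g) m"
proof (rule fls_eqI)
  fix n
  show "fls_twist \<zeta> (fls_compose_power g m) $$ n = fls_compose_power (fls_twist (\<zeta> ^ m) g) m $$ n"
    using assms by (auto simp: fls_nth_compose_power power_int_mult simp flip: power_int_of_nat)
qed

lemma fls_compose_power_compose_power:
  assumes "m > 0" "m' > 0"
  shows "fls_compose_power (fls_compose_power g m) m' = fls_compose_power g (m * m')"
proof (rule fls_eqI)
  fix n :: int
  have "int m' dvd n \<and> int m dvd n div int m' \<longleftrightarrow> int (m * m') dvd n"
    using assms by (auto simp: dvd_div_iff_mult mult.commute dvd_mult_left)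
  then show "fls_compose_power (fls_compose_power g m) m' $$ n = fls_compose_power g (m * m') $$ n"
    using assms by (auto simp: fls_nth_compose_power zdiv_zmult2_eq mult.commute)
qed

lemma fls_subst_conv_twist: "fls_subst m \<zeta> g = fls_compose_power (fls_twist \<zeta> g) m"
  by (simp add: fls_subst_def fls_twist_def)

lemma fls_subst_nth:
  "m > 0 \<Longrightarrow> fls_subst m \<zeta> g $$ n = (if int m dvd n then \<zeta> powi (n div int m) * g $$ (n div int m) else 0)"
  by (simp add: fls_subst_conv_twist fls_nth_compose_power)

lemma fls_subst_add: "fls_subst m \<zeta> (f + g) = fls_subst m \<zeta> f + fls_subst m \<zeta> g"
  by (simp add: fls_subst_conv_twist)

lemma fls_subst_diff: "fls_subst m \<zeta> (f - g) = fls_subst m \<zeta> f - fls_subst m \<zeta> g"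
  by (simp add: fls_subst_conv_twist)

lemma fls_subst_const: "m > 0 \<Longrightarrow> fls_subst m \<zeta> (fls_const c) = fls_const c"
  by (simp add: fls_subst_conv_twist)

lemma fls_subst_numeral: "m > 0 \<Longrightarrow> fls_subst m \<zeta> (numeral k) = numeral k"
  using fls_subst_const[of m \<zeta> "numeral k"] by simp

lemma fls_subst_mult: "\<zeta> \<noteq> 0 \<Longrightarrow> fls_subst m \<zeta> (f * g) = fls_subst m \<zeta> f * fls_subst m \<zeta> g"
  by (simp add: fls_subst_conv_twist fls_twist_mult)

lemma fls_subst_power: "m > 0 \<Longrightarrow> \<zeta> \<noteq> 0 \<Longrightarrow> fls_subst m \<zeta> (f ^ k) = fls_subst m \<zeta> f ^ k"
  by (simp add: fls_subst_conv_twist fls_twist_power)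

lemma fls_subst_fls_subst:
  assumes "m > 0" "m' > 0"
  shows "fls_subst m' \<zeta>' (fls_subst m \<zeta> g) = fls_subst (m * m') (\<zeta> * \<zeta>' ^ m) g"
  using assms
  by (simp add: fls_subst_conv_twist fls_twist_compose_power fls_compose_power_compose_power
      fls_twist_twist)

lemmas fls_subst_hom = fls_subst_add fls_subst_diff fls_subst_mult fls_subst_power fls_subst_const
  fls_subst_numeral fls_subst_fls_subst

lemma fls_subst_1_1 [simp]: "fls_subst 1 1 g = g"
  by (rule fls_eqI) (simp add: fls_subst_nth)

lemma fls_subst_inject:
  assumes "m > 0" "\<zeta> \<noteq> 0"
  shows "fls_subst m \<zeta> f = fls_subst m \<zeta> g \<longleftrightarrow> f = g"
proof
  assume eq: "fls_subst m \<zeta> f = fls_subst m \<zeta> g"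
  show "f = g"
  proof (rule fls_eqI)
    fix n
    have "fls_subst m \<zeta> f $$ (int m * n) = fls_subst m \<zeta> g $$ (int m * n)"
      using eq by simp
    then show "f $$ n = g $$ n"
      using assms by (simp add: fls_subst_nth)
  qed
qed simp

section \<open>Faber polynomials of degree 2 and 4\<close>

definition no_principal_part :: "'a::zero fls \<Rightarrow> bool" where
  "no_principal_part f \<longleftrightarrow> (\<forall>k<0. f $$ k = 0)"

lemma no_principal_part_add [intro]:
  "no_principal_part f \<Longrightarrow> no_principal_part g \<Longrightarrow> no_principal_part (f + g)"
  by (simp add: no_principal_part_def)

lemma no_principal_part_diff [intro]:
  "no_principal_part f \<Longrightarrow> no_principal_part g \<Longrightarrow> no_principal_part (f - g)"
  by (simp add: no_principal_part_def)

lemma no_principal_part_mult [intro]: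
  fixes f g :: "'a::idom fls"
  assumes "no_principal_part f" "no_principal_part g"
  shows "no_principal_part (f * g)"
proof (cases "f = 0 \<or> g = 0")
  case False
  then have "0 \<le> fls_subdegree f" "0 \<le> fls_subdegree g"
    using assms by (auto simp: no_principal_part_def intro!: fls_subdegree_geI)
  then show ?thesis
    unfolding no_principal_part_def by (auto intro: fls_times_nth_eq0)
qed (auto simp: no_principal_part_def)

lemma no_principal_part_power [intro]:
  fixes f :: "'a::idom fls"
  shows "no_principal_part f \<Longrightarrow> no_principal_part (f ^ k)"
proof (induction k)
  case (Suc k)
  then show ?case by (simp add: no_principal_part_mult)
qed (simp add: no_principal_part_def)

lemma no_principal_part_const [intro]: "no_principal_part (fls_const c)"
  by (simp add: no_principal_part_def)

lemma no_principal_part_numeral [intro]: "no_principal_part (numeral k)"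
  by (simp add: no_principal_part_def)

lemma no_principal_part_X [intro]: "no_principal_part fls_X"
  by (simp add: no_principal_part_def)

lemma no_principal_part_fps_to_fls [intro]: "no_principal_part (fps_to_fls F)"
  by (simp add: no_principal_part_def)

lemma fls_X_times_nth: "(fls_X * f) $$ n = (f :: 'a::semiring_1 fls) $$ (n - 1)"
  by (simp add: fls_X_times_conv_shift)

lemma fls_nth_X_times_nonpos:
  "no_principal_part (W :: 'a::semiring_1 fls) \<Longrightarrow> k \<le> 0 \<Longrightarrow> (fls_X * W) $$ k = 0"
  by (simp add: fls_X_times_nth no_principal_part_def)

lemma fls_X_times_X_inv: "fls_X * (fls_X_intpow (-1) :: 'a::field fls) = 1"
  by (simp add: fls_X_times_conv_shift)

lemma hser_nth: "hser c $$ n = (if n = -1 then 1 else if n \<ge> 1 then c (nat n) else 0)"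
  by (simp add: hser_def)

lemma hser_expansion:
  "hser c = fls_X_intpow (-1) + fls_X * (fls_const (c 1) + fls_X * (fls_const (c 2) +
     fls_X * (fls_const (c 3) + fls_X * fps_to_fls (Abs_fps (\<lambda>k. c (k + 4))))))"
proof (rule fls_eqI)
  fix n :: int
  consider "n \<le> 0" | "n = 1" | "n = 2" | "n = 3" | "n \<ge> 4" by linarith
  then show "hser c $$ n = (fls_X_intpow (-1) + fls_X * (fls_const (c 1) + fls_X * (fls_const (c 2) +
     fls_X * (fls_const (c 3) + fls_X * fps_to_fls (Abs_fps (\<lambda>k. c (k + 4))))))) $$ n"
  proof cases
    case 5
    then have "nat (n - 1 - 1 - 1 - 1) + 4 = nat n" by arith
    with 5 show ?thesis by (simp add: hser_nth fls_X_times_nth)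
  qed (auto simp: hser_nth fls_X_times_nth)
qed

lemma fls_subdegree_hser [simp]: "fls_subdegree (hser c) = -1"
  by (rule fls_subdegree_eqI) (simp_all add: hser_nth)

lemma poly_hser_lowest_term:
  fixes p :: "complex poly"
  assumes "p \<noteq> 0"
  shows "fls_subdegree (poly (map_poly fls_const p) (hser c)) = - int (degree p) \<and>
    poly (map_poly fls_const p) (hser c) $$ (- int (degree p)) = lead_coeff p"
  using assms
proof (induction p rule: pCons_induct)
  case (pCons a p)
  show ?case
  proof (cases "p = 0")
    case False
    define P where "P = poly (map_poly fls_const p) (hser c)"
    have P: "fls_subdegree P = - int (degree p)" "P $$ (- int (degree p)) = lead_coeff p"
      using pCons.IH[OF False] by (simp_all add: P_def)
    then have "P \<noteq> 0"
      using False fls_nonzeroI[of P "- int (degree p)"] by simp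
    moreover have "hser c \<noteq> 0"
      using fls_nonzeroI[of "hser c" "-1"] by (simp add: hser_nth)
    ultimately have hP: "hser c * P \<noteq> 0" "fls_subdegree (hser c * P) = - int (degree (pCons a p))"
      using False P(1) by simp_all
    have "poly (map_poly fls_const (pCons a p)) (hser c) = fls_const a + hser c * P"
      by (simp add: P_def map_poly_pCons)
    moreover have "fls_subdegree (fls_const a + hser c * P) = fls_subdegree (hser c * P)"
      using hP False by (intro fls_subdegree_add_eq2) simp_all
    moreover have "(hser c * P) $$ (- int (degree (pCons a p))) = lead_coeff p"
      using fls_times_base[of "hser c" P] hP False P by (simp add: hser_nth)
    ultimately show ?thesis
      using False hP(2) by simp
  qed (use pCons in \<open>simp add: map_poly_pCons\<close>)
qed simp

lemma map_poly_fls_const_diff: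
  "map_poly fls_const (p - q) = map_poly fls_const p - (map_poly fls_const q :: 'a::ring fls poly)"
  by (intro poly_eqI) (simp add: coeff_map_poly fls_minus_const)

lemma faber_unique:
  assumes "is_faber n c p"
  shows "faber n c = p"
  unfolding faber_def
proof (rule the_equality)
  fix p' assume p': "is_faber n c p'"
  show "p' = p"
  proof (rule ccontr)
    assume "p' \<noteq> p"
    define q where "q = p' - p"
    have "q \<noteq> 0"
      using \<open>p' \<noteq> p\<close> by (simp add: q_def)
    moreover have "degree p = n" "degree p' = n" "lead_coeff p = 1" "lead_coeff p' = 1"
      using assms p' unfolding is_faber_def by blast+
    ultimately have "degree q \<le> n" "coeff q n = 0"
      by (simp_all add: q_def degree_diff_le)
    with \<open>q \<noteq> 0\<close> have "degree q < n"
      by (metis leading_coeff_0_iff order_le_less)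
    have "poly (map_poly fls_const q) (hser c) =
        (poly (map_poly fls_const p') (hser c) - fls_X_intpow (- int n)) -
        (poly (map_poly fls_const p) (hser c) - fls_X_intpow (- int n))"
      by (simp add: q_def map_poly_fls_const_diff)
    then have "poly (map_poly fls_const q) (hser c) $$ (- int (degree q)) = 0"
      using assms p' by (simp add: is_faber_def)
    with poly_hser_lowest_term[OF \<open>q \<noteq> 0\<close>] \<open>q \<noteq> 0\<close> show False
      by simp
  qed
qed (fact assms)

lemma faber_eqI:
  assumes "degree p = n" "lead_coeff p = 1" and no_pp: "no_principal_part W"
    and "poly (map_poly fls_const p) (hser c) - fls_X_intpow (-1) ^ n = fls_X * W"
  shows "faber n c = p"
proof (rule faber_unique)
  have "fls_X_intpow (-1) ^ n = (fls_X_intpow (- int n) :: complex fls)"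
    using fls_X_intpow_power[of "-1" n] by simp
  then show "is_faber n c p"
    using assms fls_nth_X_times_nonpos[OF no_pp] by (simp add: is_faber_def)
qed

lemma fls_const_numeral_mult: "fls_const (numeral k * a) = numeral k * fls_const (a :: 'a::ring_1)"
  by (rule fls_eqI) simp

lemma poly_faber_2: "poly (map_poly fls_const (faber 2 c)) (hser c) = hser c ^ 2 - 2 * fls_const (c 1)"
proof -
  define X Y C1 C2 C3 E where "X = (fls_X :: complex fls)" and "Y = (fls_X_intpow (-1) :: complex fls)"
    and "C1 = fls_const (c 1)" and "C2 = fls_const (c 2)" and "C3 = fls_const (c 3)"
    and "E = fps_to_fls (Abs_fps (\<lambda>k. c (k + 4)))"
  have h: "hser c = Y + X * (C1 + X * (C2 + X * (C3 + X * E)))"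
    unfolding X_def Y_def C1_def C2_def C3_def E_def by (rule hser_expansion)
  have XY: "X * Y = 1"
    unfolding X_def Y_def by (rule fls_X_times_X_inv)
  have P: "poly (map_poly fls_const [:-(2 * c 1), 0, 1:]) (hser c) = hser c ^ 2 - 2 * C1"
    by (simp add: map_poly_pCons C1_def power2_eq_square fls_const_numeral_mult)
  have "faber 2 c = [:-(2 * c 1), 0, 1:]"
  proof (rule faber_eqI)
    show "poly (map_poly fls_const [:-(2 * c 1), 0, 1:]) (hser c) - fls_X_intpow (-1) ^ 2 =
      fls_X * (2 * (C2 + X * (C3 + X * E)) + X * (C1 + X * (C2 + X * (C3 + X * E))) ^ 2)"
      unfolding P Y_def[symmetric] X_def[symmetric] unfolding h using XY by algebra
    show "no_principal_part (2 * (C2 + X * (C3 + X * E)) + X * (C1 + X * (C2 + X * (C3 + X * E))) ^ 2)"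
      unfolding C1_def C2_def C3_def X_def E_def by blast
  qed simp_all
  with P show ?thesis
    by (simp add: C1_def)
qed

lemma poly_faber_4:
  "poly (map_poly fls_const (faber 4 c)) (hser c) = hser c ^ 4 - 4 * fls_const (c 1) * hser c ^ 2
     - 4 * fls_const (c 2) * hser c + (2 * fls_const (c 1) ^ 2 - 4 * fls_const (c 3))"
proof -
  define X Y C1 C2 C3 E where "X = (fls_X :: complex fls)" and "Y = (fls_X_intpow (-1) :: complex fls)"
    and "C1 = fls_const (c 1)" and "C2 = fls_const (c 2)" and "C3 = fls_const (c 3)"
    and "E = fps_to_fls (Abs_fps (\<lambda>k. c (k + 4)))"
  define B where "B = C1 + X * (C2 + X * (C3 + X * E))"
  have h: "hser c = Y + X * B"
    unfolding X_def Y_def B_def C1_def C2_def C3_def E_def by (rule hser_expansion)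
  have XY: "X * Y = 1"
    unfolding X_def Y_def by (rule fls_X_times_X_inv)
  define p where "p = [:2 * c 1 ^ 2 - 4 * c 3, -(4 * c 2), -(4 * c 1), 0, 1:]"
  have P: "poly (map_poly fls_const p) (hser c) =
     hser c ^ 4 - 4 * C1 * hser c ^ 2 - 4 * C2 * hser c + (2 * C1 ^ 2 - 4 * C3)"
    by (simp add: p_def map_poly_pCons C1_def C2_def C3_def fls_const_numeral_mult
        fls_minus_const [symmetric] fls_const_power) algebra
  have "faber 4 c = p"
  proof (rule faber_eqI)
    show "poly (map_poly fls_const p) (hser c) - fls_X_intpow (-1) ^ 4 = fls_X *
      (4 * E + 2 * (C2 + C3 * X + X ^ 2 * E) * (3 * B - C1) + 4 * X * B ^ 3 + X ^ 3 * B ^ 4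
       - 4 * C1 * X * B ^ 2 - 4 * C2 * B)"
      unfolding P Y_def[symmetric] X_def[symmetric] unfolding h B_def using XY by algebra
    show "no_principal_part (4 * E + 2 * (C2 + C3 * X + X ^ 2 * E) * (3 * B - C1) + 4 * X * B ^ 3
       + X ^ 3 * B ^ 4 - 4 * C1 * X * B ^ 2 - 4 * C2 * B)"
      unfolding B_def C1_def C2_def C3_def X_def E_def by blast
  qed (simp_all add: p_def)
  with P show ?thesis
    by (simp add: C1_def C2_def C3_def)
qed

lemma hser_square_nth_2: "(hser c ^ 2) $$ 2 = 2 * c 3 + c 1 ^ 2"
proof -
  have "{-1..3::int} = {-1, 0, 1, 2, 3}" by auto
  then show ?thesis by (simp add: power2_eq_square fls_times_nth(2) hser_nth)
qed

section \<open>The replication identities for n = 2 and n = 4\<close>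

lemma rootu_0 [simp]: "rootu 0 d = 1"
  by (simp add: rootu_def)

lemma rootu_1_2 [simp]: "rootu 1 2 = -1"
  by (simp add: rootu_def)

lemma rootu_quarters [simp]: "rootu 1 4 = \<i>" "rootu 2 4 = -1" "rootu 3 4 = -\<i>"
proof -
  have "rootu 3 4 = cis (pi + pi / 2)"
    unfolding rootu_def by (rule arg_cong[where f = cis]) simp
  also have "\<dots> = -\<i>"
    by (simp only: cis_mult [symmetric]) simp
  finally show "rootu 3 4 = -\<i>" .
qed (simp_all add: rootu_def)

lemma dvd_4_iff: "d dvd 4 \<longleftrightarrow> d = 1 \<or> d = 2 \<or> d = (4::nat)"
proof
  assume "d dvd 4"
  then have "d \<le> 4" "d \<noteq> 0" "d \<noteq> 3"
    by (auto intro: dvd_imp_le intro!: Nat.gr0I)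
  then show "d = 1 \<or> d = 2 \<or> d = 4"
    by presburger
qed auto

lemma dvd_2_iff: "d dvd 2 \<longleftrightarrow> d = 1 \<or> d = (2::nat)"
  using dvd_4_iff[of d] dvd_trans[of d 2 4] by auto

lemma sum_divisors_2: "(\<Sum>d\<in>{d. d dvd 2}. g d) = g 1 + g (2::nat)"
  and sum_even_divisors_2: "(\<Sum>d\<in>{d. d dvd 2 \<and> even d}. g d) = g (2::nat)"
  and sum_divisors_4: "(\<Sum>d\<in>{d. d dvd 4}. g d) = g 1 + g 2 + g (4::nat)"
  and sum_even_divisors_4: "(\<Sum>d\<in>{d. d dvd 4 \<and> even d}. g d) = g 2 + g (4::nat)"
proof -
  have "{d. d dvd 2} = {1, 2::nat}" "{d. d dvd 2 \<and> even d} = {2::nat}"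
    "{d. d dvd 4} = {1, 2, 4::nat}" "{d. d dvd 4 \<and> even d} = {2, 4::nat}"
    by (auto simp: dvd_2_iff dvd_4_iff)
  then show "(\<Sum>d\<in>{d. d dvd 2}. g d) = g 1 + g 2" "(\<Sum>d\<in>{d. d dvd 2 \<and> even d}. g d) = g 2"
    "(\<Sum>d\<in>{d. d dvd 4}. g d) = g 1 + g 2 + g 4" "(\<Sum>d\<in>{d. d dvd 4 \<and> even d}. g d) = g 2 + g 4"
    by (simp_all add: add.assoc)
qed

lemma sum_lessThan_2: "(\<Sum>b<2. g b) = g 0 + g (1::nat)"
  by (simp add: numeral_2_eq_2)

lemma sum_lessThan_4: "(\<Sum>b<4. g b) = g 0 + g 1 + g 2 + g (3::nat)"
  by (simp add: eval_nat_numeral)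

lemma rep2plus_identity:
  assumes "rep2plus h R" "1 \<le> n"
  shows "fls_subst n 1 (poly (map_poly fls_const (faber n h)) (hser h)) =
        (\<Sum>d \<in> {d. d dvd n}. \<Sum>b < d.
            fls_subst ((n div d)^2) (rootu b d) (hser (R (n div d) False)))
      + (\<Sum>d \<in> {d. d dvd n \<and> even d}. \<Sum>b < d.
            fls_subst (2 * (n div d)^2) (rootu b d) (hser (R (n div d) True)))"
  using assms unfolding rep2plus_def by blast

lemma rep2plus_faber_2:
  assumes "rep2plus h R"
  shows "fls_subst 2 1 (hser h ^ 2 - 2 * fls_const (h 1)) =
    fls_subst 4 1 (hser (R 2 False)) + hser h + fls_subst 1 (-1) (hser h)
    + fls_subst 2 1 (hser (R 1 True)) + fls_subst 2 (-1) (hser (R 1 True))"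
proof -
  have "R 1 False = h"
    using assms by (simp add: rep2plus_def)
  with rep2plus_identity[OF assms, of 2] show ?thesis
    by (simp add: poly_faber_2 sum_divisors_2 sum_even_divisors_2 sum_lessThan_2 add_ac
        del: One_nat_def)
qed

lemma rep2plus_faber_2_subst:
  assumes "rep2plus h R" "m > 0" "\<zeta> \<noteq> 0"
  shows "fls_subst (2 * m) (\<zeta> ^ 2) (hser h) ^ 2 - 2 * fls_const (h 1) =
    fls_subst (4 * m) (\<zeta> ^ 4) (hser (R 2 False)) + fls_subst m \<zeta> (hser h)
    + fls_subst m (-\<zeta>) (hser h) + fls_subst (2 * m) (\<zeta> ^ 2) (hser (R 1 True))
    + fls_subst (2 * m) (-(\<zeta> ^ 2)) (hser (R 1 True))"
  using arg_cong[OF rep2plus_faber_2[OF assms(1)], of "fls_subst m \<zeta>"] assms(2,3)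
  by (simp add: fls_subst_hom mult.commute)

lemma rep2plus_faber_4:
  assumes "rep2plus h R"
  shows "fls_subst 4 1 (hser h ^ 4 - 4 * fls_const (h 1) * hser h ^ 2 - 4 * fls_const (h 2) * hser h
     + (2 * fls_const (h 1) ^ 2 - 4 * fls_const (h 3))) =
    fls_subst 16 1 (hser (R 4 False))
    + fls_subst 4 1 (hser (R 2 False)) + fls_subst 4 (-1) (hser (R 2 False))
    + hser h + fls_subst 1 \<i> (hser h) + fls_subst 1 (-1) (hser h) + fls_subst 1 (-\<i>) (hser h)
    + fls_subst 8 1 (hser (R 2 True)) + fls_subst 8 (-1) (hser (R 2 True))
    + fls_subst 2 1 (hser (R 1 True)) + fls_subst 2 \<i> (hser (R 1 True))
    + fls_subst 2 (-1) (hser (R 1 True)) + fls_subst 2 (-\<i>) (hser (R 1 True))"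
proof -
  have "R 1 False = h"
    using assms by (simp add: rep2plus_def)
  with rep2plus_identity[OF assms, of 4] show ?thesis
    by (simp add: poly_faber_4 sum_divisors_4 sum_even_divisors_4 sum_lessThan_2 sum_lessThan_4
        add_ac del: One_nat_def)
qed

lemma rep2plus_coeff_identity:
  assumes "rep2plus h R"
  shows "2 * h 3 + h 1 ^ 2 = R 2 False 1 + 2 * h 4 + 2 * R 1 True 2"
proof -
  have "fls_subst 2 1 (hser h ^ 2 - 2 * fls_const (h 1)) $$ 4 = (2 * h 3 + h 1 ^ 2)"
    by (simp add: fls_subst_nth hser_square_nth_2)
  with arg_cong[OF rep2plus_faber_2[OF assms], of "\<lambda>g. g $$ 4"] show ?thesis
    by (simp add: fls_subst_nth hser_nth add_ac)
qed

section \<open>The identity for completely (2+)-replicable series\<close>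

lemma sigma2_Nil [simp]: "sigma2 [] = 0"
  by (simp add: sigma2_def)

lemma sigma2_Cons [simp]: "sigma2 (x # xs) = x * sum_list xs + sigma2 xs"
proof -
  let ?n = "length xs"
  have "sigma2 (x # xs) =
      (\<Sum>i<Suc ?n. \<Sum>j<Suc ?n. if i < j then (x # xs) ! i * (x # xs) ! j else 0)"
    by (simp add: sigma2_def)
  also have "\<dots> = (\<Sum>j<?n. x * xs ! j) + (\<Sum>i<?n. \<Sum>j<?n. if i < j then xs ! i * xs ! j else 0)"
    by (simp only: sum.lessThan_Suc_shift nth_Cons_Suc nth_Cons_0 Suc_less_eq) simp
  also have "\<dots> = x * sum_list xs + sigma2 xs"
    by (simp add: sigma2_def sum_list_sum_nth atLeast0LessThan sum_distrib_left)
  finally show ?thesis .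
qed

lemma two_sigma2_eq: "2 * sigma2 xs = sum_list xs ^ 2 - sum_list (map (\<lambda>x. x ^ 2) xs)"
  for xs :: "'a::comm_ring_1 list"
  by (induction xs) (simp_all add: power2_eq_square algebra_simps)

lemma completely_rep2plus_rep2plus:
  assumes "completely_rep2plus f F"
  shows "rep2plus f F"
    and "rep2plus (F 1 True) (\<lambda>m e. F (m * (if e then 2 else 1)) (\<not> e))"
    and "rep2plus (F 2 False) (\<lambda>m e. F (m * 2) e)"
proof -
  have R: "rep2plus (F n e) (\<lambda>m e'. F (m * n * (if e \<and> e' then 2 else 1)) (e \<noteq> e'))"
    if "n \<ge> 1" for n e
    using assms that unfolding completely_rep2plus_def by blast
  show "rep2plus f F"
    using R[of 1 False] assms by (simp add: completely_rep2plus_def)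
  show "rep2plus (F 1 True) (\<lambda>m e. F (m * (if e then 2 else 1)) (\<not> e))"
    using R[of 1 True] by simp
  show "rep2plus (F 2 False) (\<lambda>m e. F (m * 2) e)"
    using R[of 2 False] by simp
qed

lemma sum_squares_replicates:
  assumes "completely_rep2plus f F"
  shows "fls_subst 8 1 (hser (F 2 False)) ^ 2 + fls_subst 4 1 (hser (F 1 True)) ^ 2
      + fls_subst 4 (-1) (hser (F 1 True)) ^ 2 + fls_subst 2 1 (hser f) ^ 2
      + fls_subst 2 (-1) (hser f) ^ 2 =
    fls_subst 4 1 (hser f) ^ 4 - 4 * fls_const (f 1) * fls_subst 4 1 (hser f) ^ 2
      - 4 * fls_const (f 2) * fls_subst 4 1 (hser f) + (2 * fls_const (f 1) ^ 2 - 4 * fls_const (f 3))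
      + 2 * fls_const (F 2 False 1) + 4 * fls_const (f 1) + 2 * fls_subst 4 1 (hser (F 2 False))
      + 2 * fls_subst 4 1 (hser (F 1 True)) ^ 2"
    (is "?a1 ^ 2 + ?a2 ^ 2 + ?a3 ^ 2 + ?a4 ^ 2 + ?a5 ^ 2 = _")
proof -
  note Rf = completely_rep2plus_rep2plus(1)[OF assms]
  note Rg = completely_rep2plus_rep2plus(2)[OF assms]
  note R2 = completely_rep2plus_rep2plus(3)[OF assms]
  let ?hf = "hser f" and ?hg = "hser (F 1 True)" and ?h2 = "hser (F 2 False)"
    and ?hk = "hser (F 2 True)" and ?h4 = "hser (F 4 False)"
  have i4: "\<i> ^ 4 = 1"
    by (simp add: power_mult[of _ 2 2, simplified])
  have "?a1 ^ 2 - 2 * fls_const (F 2 False 1) = fls_subst 16 1 ?h4 + fls_subst 4 1 ?h2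
      + fls_subst 4 (-1) ?h2 + fls_subst 8 1 ?hk + fls_subst 8 (-1) ?hk"
    using rep2plus_faber_2_subst[OF R2, of 4 1] by simp
  moreover have "?a2 ^ 2 - 2 * fls_const (F 1 True 1) = fls_subst 8 1 ?hk + fls_subst 2 1 ?hg
      + fls_subst 2 (-1) ?hg + fls_subst 4 1 ?h2 + fls_subst 4 (-1) ?h2"
    using rep2plus_faber_2_subst[OF Rg, of 2 1] by simp
  moreover have "?a3 ^ 2 - 2 * fls_const (F 1 True 1) = fls_subst 8 1 ?hk + fls_subst 2 \<i> ?hg
      + fls_subst 2 (-\<i>) ?hg + fls_subst 4 (-1) ?h2 + fls_subst 4 1 ?h2"
    using rep2plus_faber_2_subst[OF Rg, of 2 \<i>] by (simp add: i4)
  moreover have "?a4 ^ 2 - 2 * fls_const (f 1) = fls_subst 4 1 ?h2 + ?hf + fls_subst 1 (-1) ?hf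
      + fls_subst 2 1 ?hg + fls_subst 2 (-1) ?hg"
    using rep2plus_faber_2_subst[OF Rf, of 1 1] by (simp del: One_nat_def)
  moreover have "?a5 ^ 2 - 2 * fls_const (f 1) = fls_subst 4 1 ?h2 + fls_subst 1 \<i> ?hf
      + fls_subst 1 (-\<i>) ?hf + fls_subst 2 (-1) ?hg + fls_subst 2 1 ?hg"
    using rep2plus_faber_2_subst[OF Rf, of 1 \<i>] by (simp add: i4)
  moreover have "fls_subst 4 1 ?hf ^ 4 - 4 * fls_const (f 1) * fls_subst 4 1 ?hf ^ 2
      - 4 * fls_const (f 2) * fls_subst 4 1 ?hf + (2 * fls_const (f 1) ^ 2 - 4 * fls_const (f 3)) =
    fls_subst 16 1 ?h4 + fls_subst 4 1 ?h2 + fls_subst 4 (-1) ?h2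
    + ?hf + fls_subst 1 \<i> ?hf + fls_subst 1 (-1) ?hf + fls_subst 1 (-\<i>) ?hf
    + fls_subst 8 1 ?hk + fls_subst 8 (-1) ?hk
    + fls_subst 2 1 ?hg + fls_subst 2 \<i> ?hg + fls_subst 2 (-1) ?hg + fls_subst 2 (-\<i>) ?hg"
    using rep2plus_faber_4[OF Rf] by (simp add: fls_subst_hom)
  (* The five right-hand sides add up to the right-hand side of the n = 4 identity, plus twice
     that of the identity for a2, plus 2 fls_subst 4 1 h2. *)
  ultimately show ?thesis
    by algebra
qed

(* The proposition in the variable s = q^(1/4), in which all five series and their squares
   are Laurent series. *)

lemma sigma2_replicates_fourth_root:
  assumes "completely_rep2plus f F"
  shows "sigma2 [fls_subst 8 1 (hser (F 2 False)), fls_subst 4 1 (hser (F 1 True)),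
      fls_subst 4 (-1) (hser (F 1 True)), fls_subst 2 1 (hser f), fls_subst 2 (-1) (hser f)] =
    fls_const (2 * f 2) * fls_subst 4 1 (hser f) - fls_subst 4 1 (hser (F 2 False))
      + fls_const (2 * (f 4 - f 1) + 2 * F 1 True 2) - fls_subst 4 1 (hser (F 1 True)) ^ 2"
    (is "sigma2 [?a1, ?a2, ?a3, ?a4, ?a5] = ?rhs")
proof -
  note Rf = completely_rep2plus_rep2plus(1)[OF assms]
  have sum: "?a1 + ?a2 + ?a3 + ?a4 + ?a5 = fls_subst 4 1 (hser f) ^ 2 - 2 * fls_const (f 1)"
    using rep2plus_faber_2_subst[OF Rf, of 2 1] by (simp add: add_ac)
  have "fls_const (2 * f 3 + f 1 ^ 2) = (fls_const (F 2 False 1 + 2 * f 4 + 2 * F 1 True 2) :: complex fls)"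
    using rep2plus_coeff_identity[OF Rf] by simp
  then have coeff: "2 * fls_const (f 3) + fls_const (f 1) ^ 2 =
      fls_const (F 2 False 1) + 2 * fls_const (f 4) + 2 * (fls_const (F 1 True 2) :: complex fls)"
    by (simp add: fls_plus_const [symmetric] fls_const_numeral_mult fls_const_power)
  have "2 * sigma2 [?a1, ?a2, ?a3, ?a4, ?a5] =
      (?a1 + ?a2 + ?a3 + ?a4 + ?a5) ^ 2 - (?a1 ^ 2 + ?a2 ^ 2 + ?a3 ^ 2 + ?a4 ^ 2 + ?a5 ^ 2)"
    by (simp only: two_sigma2_eq) (simp add: add_ac)
  also have "\<dots> = 2 * ?rhs"
    unfolding sum sum_squares_replicates[OF assms] using coeff
    by (simp add: fls_plus_const [symmetric] fls_minus_const [symmetric] fls_const_numeral_mult) algebra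
  finally have "2 * sigma2 [?a1, ?a2, ?a3, ?a4, ?a5] = 2 * ?rhs" .
  moreover have "(2 :: complex fls) \<noteq> 0"
    by (rule fls_nonzeroI[of _ 0]) simp
  ultimately show ?thesis
    using mult_left_cancel by blast
qed

theorem proposition4p11:
  fixes f :: "nat \<Rightarrow> complex" and F :: "nat \<Rightarrow> bool \<Rightarrow> (nat \<Rightarrow> complex)"
  assumes "completely_rep2plus f F"
  shows "sigma2 [fls_subst 4 1 (hser (F 2 False)),
                 fls_subst 2 1 (hser (F 1 True)),
                 fls_subst 2 (-1) (hser (F 1 True)),
                 fls_subst 1 1 (hser f),
                 fls_subst 1 (-1) (hser f)]
       = fls_const (2 * f 2) * fls_subst 2 1 (hser f) - fls_subst 2 1 (hser (F 2 False))
         + fls_const (2 * (f 4 - f 1) + 2 * F 1 True 2)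
         - (fls_subst 2 1 (hser (F 1 True)))^2"
proof -
  have "fls_subst 2 1 (sigma2 [fls_subst 4 1 (hser (F 2 False)), fls_subst 2 1 (hser (F 1 True)),
          fls_subst 2 (-1) (hser (F 1 True)), fls_subst 1 1 (hser f), fls_subst 1 (-1) (hser f)]) =
        fls_subst 2 1 (fls_const (2 * f 2) * fls_subst 2 1 (hser f) - fls_subst 2 1 (hser (F 2 False))
          + fls_const (2 * (f 4 - f 1) + 2 * F 1 True 2) - (fls_subst 2 1 (hser (F 1 True)))^2)"
    using sigma2_replicates_fourth_root[OF assms] by (simp add: fls_subst_hom)
  then show ?thesis
    by (simp add: fls_subst_inject)
qed

end
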